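(* Let $L\ge2$, let $S=(d,N_1,\dots,N_{L-1},1)$ be a neural network architecture, let $B>0$, and let $\varrho:\mathbb{R}\to\mathbb{R}$. Assume at least one of the following: (i) $N_{L-1}\ge2$ and $\varrho\in C^1(\mathbb{R})\setminus C^\infty(\mathbb{R})$; (ii) $N_{L-1}\ge2$ and $\varrho$ is bounded, analytic, and not constant; (iii) $\varrho$ is approximately homogeneous of order $(r,q)$ for some $r,q\in\mathbb{N}_0$ with $r\ne q$, and $\varrho\in C^{\max\{r,q\}}(\mathbb{R})$. Then $\mathcal{RNN}_\varrho^{[-B,B]^d}(S)$ is not closed in $C([-B,B]^d)$ (with the supremum norm).
   Context: A neural network with architecture $S=(N_0,\dots,N_L)$ ($N_0=d$) is a family $\Phi=((A_\ell,b_\ell))_{\ell=1}^L$, $A_\ell\in\mathbb{R}^{N_\ell\times N_{\ell-1}}$, $b_\ell\in\mathbb{R}^{N_\ell}$; $\mathcal{NN}(S)$ is the set of these. For $\varrho:\mathbb{R}\to\mathbb{R}$ and $\Omega\subset\mathbb{R}^d$, $\mathrm{R}_\varrho^\Omega(\Phi):\Omega\to\mathbb{R}^{N_L}$, $x\mapsto x_L$, where $x_0=x$, $x_\ell=\varrho(A_\ell x_{\ell-1}+b_\ell)$ for $1\le\ell\le L-1$ (componentwise), $x_L=A_Lx_{L-1}+b_L$; $\mathcal{RNN}_\varrho^\Omega(S)=\{\mathrm{R}_\varrho^\Omega(\Phi):\Phi\in\mathcal{NN}(S)\}$. A function $f:\mathbb{R}\to\mathbb{R}$ is approximately homogeneous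 of order $(r,q)\in\mathbb{N}_0^2$ if there is $s>0$ with $|f(x)-x^r|\le s$ for all $x\ge0$ and $|f(x)-x^q|\le s$ for all $x\le0$. *)

theory Defs
  imports "HOL-Analysis.Analysis"
begin

type_synonym layer = "(nat \<Rightarrow> nat \<Rightarrow> real) \<times> (nat \<Rightarrow> real)"

text \<open>Evaluation of a network with architecture S = [N_0,...,N_L]; vectors in R^n are
  represented as functions nat => real of which only the first n entries are used;
  matrix A : R^{N_l x N_(l-1)} is represented as A i j with i < N_l, j < N_(l-1).\<close>
fun nn_eval :: "(real \<Rightarrow> real) \<Rightarrow> nat list \<Rightarrow> layer list \<Rightarrow> (nat \<Rightarrow> real) \<Rightarrow> (nat \<Rightarrow> real)" where
  "nn_eval \<rho> (n # m # ns) ((A, b) # \<Phi>) x =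
     (let y = (\<lambda>i. (\<Sum>j<n. A i j * x j) + b i)
      in if ns = [] then y else nn_eval \<rho> (m # ns) \<Phi> (\<lambda>i. \<rho> (y i)))"
| "nn_eval \<rho> _ _ x = x"

definition NN :: "nat list \<Rightarrow> layer list set" where
  "NN S = {\<Phi>. length \<Phi> = length S - 1}"

definition realize :: "(real \<Rightarrow> real) \<Rightarrow> nat list \<Rightarrow> layer list \<Rightarrow> (nat \<Rightarrow> real) \<Rightarrow> real" where
  "realize \<rho> S \<Phi> x = nn_eval \<rho> S \<Phi> x 0"

definition cube :: "nat \<Rightarrow> real \<Rightarrow> (nat \<Rightarrow> real) set" where
  "cube d B = {x. (\<forall>i<d. - B \<le> x i \<and> x i \<le> B) \<and> (\<forall>i\<ge>d. x i = 0)}"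

definition Ck :: "nat \<Rightarrow> (real \<Rightarrow> real) \<Rightarrow> bool" where
  "Ck k f \<longleftrightarrow> (\<forall>i<k. \<forall>x. (deriv ^^ i) f differentiable (at x))
               \<and> continuous_on UNIV ((deriv ^^ k) f)"

definition Cinf :: "(real \<Rightarrow> real) \<Rightarrow> bool" where
  "Cinf f \<longleftrightarrow> (\<forall>k. Ck k f)"

definition real_analytic :: "(real \<Rightarrow> real) \<Rightarrow> bool" where
  "real_analytic f \<longleftrightarrow> (\<forall>x0. \<exists>r>0. \<exists>c :: nat \<Rightarrow> real.
      \<forall>x. \<bar>x - x0\<bar> < r \<longrightarrow> (\<lambda>n. c n * (x - x0) ^ n) sums f x)"

definition approx_homogeneous :: "(real \<Rightarrow> real) \<Rightarrow> nat \<Rightarrow> nat \<Rightarrow> bool" where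
  "approx_homogeneous f r q \<longleftrightarrow> (\<exists>s>0. (\<forall>x\<ge>0. \<bar>f x - x ^ r\<bar> \<le> s) \<and> (\<forall>x\<le>0. \<bar>f x - x ^ q\<bar> \<le> s))"

end

theory Submission
  imports Defs "HOL-Complex_Analysis.Complex_Analysis"
begin

text \<open>In each case we exhibit a continuous function $G$ of the first input coordinate that is a
  uniform limit of realizations on the cube but is not itself a realization. Since $\rho$ is
  differentiable and not constant, $\rho'(p) \neq 0$ somewhere, so a neuron with a small input
  weight passes its input on up to an affine map and a small error; hence hidden layers can be
  traversed, and it suffices to approximate $G$ on compact intervals by networks with one hidden
  layer. The limits are $\rho'(\cdot + z)$, a limit of difference quotients, in case (i); the
  identity in case (ii); and the one-sided power $\max(s, 0)^m$ or $\min(s, 0)^m$, the limit of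
  $\rho(N s) / N^m$, in case (iii). None is a realization: realizations are $C^{k+1}$ if
  $\rho \in C^{k+1}$, whereas $\rho'(\cdot + z)$ is not for suitable $z$; they are bounded and
  analytic in case (ii); and they are $C^m$ in case (iii), whereas the $m$-th derivative of the
  one-sided power jumps at $0$.\<close>

section \<open>Functions of class $C^k$\<close>

lemma Ck_0: "Ck 0 f \<longleftrightarrow> continuous_on UNIV f"
  by (simp add: Ck_def)

lemma Ck_Suc: "Ck (Suc k) f \<longleftrightarrow> (\<forall>x. f differentiable (at x)) \<and> Ck k (deriv f)"
proof -
  have "(deriv ^^ Suc i) f = (deriv ^^ i) (deriv f)" for i
    by (simp add: funpow_Suc_right del: funpow.simps)
  then show ?thesis
    unfolding Ck_def All_less_Suc2 by simp
qed

lemma Ck_Suc_imp_Ck: "Ck (Suc k) f \<Longrightarrow> Ck k f"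
proof (induction k arbitrary: f)
  case 0
  then show ?case
    by (auto simp: Ck_Suc Ck_0 intro!: continuous_at_imp_continuous_on differentiable_imp_continuous_within)
next
  case (Suc k)
  then show ?case by (simp add: Ck_Suc)
qed

lemma Ck_mono: "j \<le> k \<Longrightarrow> Ck k f \<Longrightarrow> Ck j f"
proof (induction k)
  case 0
  then show ?case by simp
next
  case (Suc k)
  then show ?case using Ck_Suc_imp_Ck le_Suc_eq by blast
qed

lemma Ck_const: "Ck k (\<lambda>x. c)"
  by (induction k arbitrary: c) (simp_all add: Ck_0 Ck_Suc)

lemma Ck_ident: "Ck k (\<lambda>x. x)"
  by (cases k) (simp_all add: Ck_0 Ck_Suc Ck_const)

lemma Ck_add: "Ck k f \<Longrightarrow> Ck k g \<Longrightarrow> Ck k (\<lambda>x. f x + g x)"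
proof (induction k arbitrary: f g)
  case 0
  then show ?case by (simp add: Ck_0 continuous_on_add)
next
  case (Suc k)
  then have df: "\<And>x. f differentiable (at x)" and dg: "\<And>x. g differentiable (at x)"
    by (auto simp: Ck_Suc)
  have "deriv (\<lambda>x. f x + g x) = (\<lambda>x. deriv f x + deriv g x)"
    using df dg by (intro ext DERIV_imp_deriv DERIV_add) (simp_all add: DERIV_deriv_iff_real_differentiable)
  then show ?case using Suc df dg by (simp add: Ck_Suc)
qed

lemma Ck_mult: "Ck k f \<Longrightarrow> Ck k g \<Longrightarrow> Ck k (\<lambda>x. f x * g x)"
proof (induction k arbitrary: f g)
  case 0
  then show ?case by (simp add: Ck_0 continuous_on_mult)
next
  case (Suc k)
  then have df: "\<And>x. f differentiable (at x)" and dg: "\<And>x. g differentiable (at x)"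
    by (auto simp: Ck_Suc)
  have deriv_eq: "deriv (\<lambda>x. f x * g x) = (\<lambda>x. f x * deriv g x + deriv f x * g x)"
    using df dg by (intro ext DERIV_imp_deriv DERIV_mult') (simp_all add: DERIV_deriv_iff_real_differentiable)
  have "Ck k f" "Ck k (deriv f)" "Ck k g" "Ck k (deriv g)"
    using Suc.prems Ck_Suc_imp_Ck by (auto simp: Ck_Suc)
  then show ?case using df dg by (simp add: Ck_Suc deriv_eq Ck_add Suc.IH)
qed

lemma Ck_compose: "Ck k f \<Longrightarrow> Ck k u \<Longrightarrow> Ck k (\<lambda>x. f (u x))"
proof (induction k arbitrary: f u)
  case 0
  then show ?case
    unfolding Ck_0 by (rule continuous_on_compose2[of UNIV f UNIV u]) simp_all
next
  case (Suc k)
  then have df: "\<And>x. f differentiable (at x)" and du: "\<And>x. u differentiable (at x)"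
    by (simp_all add: Ck_Suc)
  have chain: "((\<lambda>x. f (u x)) has_real_derivative deriv f (u x) * deriv u x) (at x)" for x
    by (rule DERIV_chain2) (use df du DERIV_deriv_iff_real_differentiable in blast)+
  have "Ck k (\<lambda>x. deriv f (u x))"
    by (rule Suc.IH) (use Suc.prems Ck_Suc_imp_Ck in \<open>simp_all add: Ck_Suc\<close>)
  moreover have "Ck k (deriv u)"
    using Suc.prems by (simp add: Ck_Suc)
  ultimately have "Ck k (\<lambda>x. deriv f (u x) * deriv u x)"
    by (rule Ck_mult)
  moreover have "deriv (\<lambda>x. f (u x)) = (\<lambda>x. deriv f (u x) * deriv u x)"
    using chain by (intro ext DERIV_imp_deriv)
  moreover have "(\<lambda>x. f (u x)) differentiable (at x)" for x
    using chain real_differentiable_def by blast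
  ultimately show ?case by (simp add: Ck_Suc)
qed

definition Ck_at :: "nat \<Rightarrow> (real \<Rightarrow> real) \<Rightarrow> real \<Rightarrow> bool" where
  "Ck_at k f z \<longleftrightarrow> (\<forall>i<k. (deriv ^^ i) f differentiable (at z)) \<and> isCont ((deriv ^^ k) f) z"

lemma Ck_iff_Ck_at: "Ck k f \<longleftrightarrow> (\<forall>z. Ck_at k f z)"
  unfolding Ck_def Ck_at_def continuous_on_eq_continuous_at[OF open_UNIV] by blast

lemma Ck_at_cong:
  assumes "eventually (\<lambda>x. f x = g x) (nhds z)"
  shows "Ck_at k f z \<longleftrightarrow> Ck_at k g z"
proof -
  have "eventually (\<lambda>y. eventually (\<lambda>x. f x = g x) (nhds y)) (nhds z)"
    using assms by (simp add: eventually_eventually)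
  then have ev: "eventually (\<lambda>x. (deriv ^^ i) f x = (deriv ^^ i) g x) (nhds z)" for i
    by eventually_elim (rule higher_deriv_cong_ev, simp_all)
  have "(deriv ^^ i) f differentiable (at z) \<longleftrightarrow> (deriv ^^ i) g differentiable (at z)" for i
    unfolding real_differentiable_def using DERIV_cong_ev[OF refl ev refl] by blast
  moreover have "isCont ((deriv ^^ k) f) z \<longleftrightarrow> isCont ((deriv ^^ k) g) z"
    by (rule isCont_cong[OF ev])
  ultimately show ?thesis
    unfolding Ck_at_def by simp
qed

lemma higher_deriv_power:
  "j \<le> m \<Longrightarrow> (deriv ^^ j) (\<lambda>t::real. t ^ m) = (\<lambda>t. (\<Prod>i<j. real (m - i)) * t ^ (m - j))"
proof (induction j)
  case 0
  then show ?case by simp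
next
  case (Suc j)
  have "((\<lambda>t. (\<Prod>i<j. real (m - i)) * t ^ (m - j)) has_real_derivative
      (\<Prod>i<Suc j. real (m - i)) * t ^ (m - Suc j)) (at t)" for t
    using DERIV_cmult[OF DERIV_pow[of "m - j" t], of "\<Prod>i<j. real (m - i)"]
    by (simp add: mult_ac)
  then have "deriv (\<lambda>t. (\<Prod>i<j. real (m - i)) * t ^ (m - j)) = (\<lambda>t. (\<Prod>i<Suc j. real (m - i)) * t ^ (m - Suc j))"
    by (intro ext DERIV_imp_deriv)
  with Suc show ?case
    by (simp del: prod.lessThan_Suc)
qed

text \<open>The $m$-th derivative would have to jump from $m!$ to $0$ at $0$.\<close>

lemma power_glued_to_zero_not_Ck:
  fixes f :: "real \<Rightarrow> real"
  assumes "open U" "open V" "0 \<in> closure U" "0 \<in> closure V"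
    and "\<forall>t\<in>U. f t = t ^ m" "\<forall>t\<in>V. f t = 0"
  shows "\<not> Ck m f"
proof
  assume "Ck m f"
  define D where "D = (deriv ^^ m) f"
  have cont: "isCont D 0"
    using \<open>Ck m f\<close> unfolding Ck_iff_Ck_at Ck_at_def D_def by blast
  have limit_value: "D 0 = c" if "0 \<in> closure W" "\<forall>t\<in>W. D t = c" for W c
  proof -
    from \<open>0 \<in> closure W\<close> obtain X where "\<forall>n. X n \<in> W" "X \<longlonglongrightarrow> 0"
      unfolding closure_sequential by blast
    then have "(\<lambda>n. c) \<longlonglongrightarrow> D 0"
      using isCont_tendsto_compose[OF cont, of X] \<open>\<forall>t\<in>W. D t = c\<close> by simp
    then show ?thesis
      by (auto simp: LIMSEQ_const_iff)
  qed
  have "\<forall>t\<in>U. D t = fact m"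
  proof
    fix t assume "t \<in> U"
    then have "eventually (\<lambda>x. f x = x ^ m) (nhds t)"
      using assms(5) by (intro eventually_mono[OF eventually_nhds_in_open[OF assms(1)]]) auto
    then have "D t = (deriv ^^ m) (\<lambda>t. t ^ m) t"
      unfolding D_def by (intro higher_deriv_cong_ev) simp_all
    then show "D t = fact m"
      by (simp add: higher_deriv_power fact_prod_rev atLeast0LessThan)
  qed
  moreover have "\<forall>t\<in>V. D t = 0"
  proof
    fix t assume "t \<in> V"
    then have "eventually (\<lambda>x. f x = 0) (nhds t)"
      using assms(6) by (intro eventually_mono[OF eventually_nhds_in_open[OF assms(2)]]) auto
    then have "D t = (deriv ^^ m) (\<lambda>t. 0) t"
      unfolding D_def by (intro higher_deriv_cong_ev) simp_all
    then show "D t = 0"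
      by (simp add: higher_deriv_const)
  qed
  ultimately have "D 0 = fact m" "D 0 = 0"
    using limit_value assms(3,4) by blast+
  then show False
    by simp
qed

section \<open>Real functions with local holomorphic extensions\<close>

text \<open>Real-analytic functions have this property (their power series also converge in a complex
  disc), and unlike real analyticity it is evidently preserved under composition.\<close>

definition real_holomorphic :: "(real \<Rightarrow> real) \<Rightarrow> bool" where
  "real_holomorphic f \<longleftrightarrow> (\<forall>x0. \<exists>r>0. \<exists>F. F holomorphic_on ball (complex_of_real x0) r \<and>
      (\<forall>x. \<bar>x - x0\<bar> < r \<longrightarrow> F (complex_of_real x) = complex_of_real (f x)))"

lemma real_holomorphic_const: "real_holomorphic (\<lambda>t. c)"
  unfolding real_holomorphic_def
  by (intro allI exI[of _ 1] conjI exI[of _ "\<lambda>z. complex_of_real c"]) auto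

lemma real_holomorphic_ident: "real_holomorphic (\<lambda>t. t)"
  unfolding real_holomorphic_def
  by (intro allI exI[of _ 1] conjI exI[of _ "\<lambda>z. z"]) auto

lemma real_holomorphic_add:
  assumes "real_holomorphic f" "real_holomorphic g"
  shows "real_holomorphic (\<lambda>t. f t + g t)"
  unfolding real_holomorphic_def
proof
  fix x0
  obtain r1 F where r1: "r1 > 0" "F holomorphic_on ball (complex_of_real x0) r1"
      "\<forall>x. \<bar>x - x0\<bar> < r1 \<longrightarrow> F (complex_of_real x) = complex_of_real (f x)"
    using assms(1) unfolding real_holomorphic_def by blast
  obtain r2 G where r2: "r2 > 0" "G holomorphic_on ball (complex_of_real x0) r2"
      "\<forall>x. \<bar>x - x0\<bar> < r2 \<longrightarrow> G (complex_of_real x) = complex_of_real (g x)"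
    using assms(2) unfolding real_holomorphic_def by blast
  have "(\<lambda>z. F z + G z) holomorphic_on ball (complex_of_real x0) (min r1 r2)"
    by (intro holomorphic_intros holomorphic_on_subset[OF r1(2)] holomorphic_on_subset[OF r2(2)]) auto
  then show "\<exists>r>0. \<exists>H. H holomorphic_on ball (complex_of_real x0) r \<and>
      (\<forall>x. \<bar>x - x0\<bar> < r \<longrightarrow> H (complex_of_real x) = complex_of_real (f x + g x))"
    using r1 r2 by (intro exI[of _ "min r1 r2"] conjI exI[of _ "\<lambda>z. F z + G z"]) auto
qed

lemma real_holomorphic_cmult:
  assumes "real_holomorphic f"
  shows "real_holomorphic (\<lambda>t. c * f t)"
  unfolding real_holomorphic_def
proof
  fix x0
  obtain r F where r: "r > 0" "F holomorphic_on ball (complex_of_real x0) r"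
      "\<forall>x. \<bar>x - x0\<bar> < r \<longrightarrow> F (complex_of_real x) = complex_of_real (f x)"
    using assms unfolding real_holomorphic_def by blast
  have "(\<lambda>z. complex_of_real c * F z) holomorphic_on ball (complex_of_real x0) r"
    by (intro holomorphic_intros r(2))
  then show "\<exists>r>0. \<exists>H. H holomorphic_on ball (complex_of_real x0) r \<and>
      (\<forall>x. \<bar>x - x0\<bar> < r \<longrightarrow> H (complex_of_real x) = complex_of_real (c * f x))"
    using r by (intro exI[of _ r] conjI exI[of _ "\<lambda>z. complex_of_real c * F z"]) auto
qed

lemma real_holomorphic_compose:
  assumes "real_holomorphic f" "real_holomorphic u"
  shows "real_holomorphic (\<lambda>t. f (u t))"
  unfolding real_holomorphic_def
proof
  fix x0
  obtain r1 F where r1: "r1 > 0" "F holomorphic_on ball (complex_of_real (u x0)) r1"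
      "\<forall>x. \<bar>x - u x0\<bar> < r1 \<longrightarrow> F (complex_of_real x) = complex_of_real (f x)"
    using assms(1) unfolding real_holomorphic_def by blast
  obtain r2 U where r2: "r2 > 0" "U holomorphic_on ball (complex_of_real x0) r2"
      "\<forall>x. \<bar>x - x0\<bar> < r2 \<longrightarrow> U (complex_of_real x) = complex_of_real (u x)"
    using assms(2) unfolding real_holomorphic_def by blast
  define W where "W = ball (complex_of_real x0) r2 \<inter> U -` ball (complex_of_real (u x0)) r1"
  have "open W"
    unfolding W_def
    by (intro continuous_open_preimage holomorphic_on_imp_continuous_on[OF r2(2)]) auto
  moreover have "complex_of_real x0 \<in> W"
    using r1(1) r2 unfolding W_def by auto
  ultimately obtain r where r: "r > 0" "ball (complex_of_real x0) r \<subseteq> W"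
    using open_contains_ball by blast
  have "(F \<circ> U) holomorphic_on ball (complex_of_real x0) r"
    using r(2) unfolding W_def
    by (intro holomorphic_on_compose_gen[OF holomorphic_on_subset[OF r2(2)] r1(2)]) auto
  moreover have "F (U (complex_of_real x)) = complex_of_real (f (u x))" if "\<bar>x - x0\<bar> < r" for x
  proof -
    have "complex_of_real x \<in> W"
      using r(2) that by (auto simp: dist_norm norm_minus_commute simp flip: of_real_diff)
    then have "\<bar>x - x0\<bar> < r2" "U (complex_of_real x) \<in> ball (complex_of_real (u x0)) r1"
      unfolding W_def by (auto simp: dist_norm norm_minus_commute simp flip: of_real_diff)
    then show ?thesis
      using r1(3) r2(3) by (auto simp: dist_norm norm_minus_commute simp flip: of_real_diff)
  qed
  ultimately show "\<exists>r>0. \<exists>H. H holomorphic_on ball (complex_of_real x0) r \<and>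
      (\<forall>x. \<bar>x - x0\<bar> < r \<longrightarrow> H (complex_of_real x) = complex_of_real (f (u x)))"
    using r(1) by (intro exI[of _ r] conjI exI[of _ "F \<circ> U"]) auto
qed

lemma real_analytic_imp_real_holomorphic:
  assumes "real_analytic f"
  shows "real_holomorphic f"
  unfolding real_holomorphic_def
proof
  fix x0
  obtain r c where "r > 0" and series: "\<forall>x. \<bar>x - x0\<bar> < r \<longrightarrow> (\<lambda>n. c n * (x - x0) ^ n) sums f x"
    using assms unfolding real_analytic_def by blast
  define F where "F w = (\<Sum>n. complex_of_real (c n) * (w - complex_of_real x0) ^ n)" for w
  have "(\<lambda>n. complex_of_real (c n) * (w - complex_of_real x0) ^ n) sums F w"
    if "w \<in> ball (complex_of_real x0) r" for w
  proof -
    define K where "K = (norm (w - complex_of_real x0) + r) / 2"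
    have "norm (w - complex_of_real x0) < r"
      using that by (simp add: dist_norm norm_minus_commute)
    then have "norm (w - complex_of_real x0) < K" "K < r"
      unfolding K_def by auto
    moreover from this(1) have "0 < K"
      by (rule le_less_trans[OF norm_ge_zero])
    ultimately have K: "\<bar>K\<bar> < r" "norm (w - complex_of_real x0) < norm (complex_of_real K)"
      by simp_all
    have "summable (\<lambda>n. c n * K ^ n)"
      using series[rule_format, of "x0 + K"] K(1) by (simp add: sums_summable)
    then have "summable (\<lambda>n. complex_of_real (c n * K ^ n))"
      by (simp only: summable_complex_of_real)
    then have "summable (\<lambda>n. complex_of_real (c n) * complex_of_real K ^ n)"
      by simp
    then show ?thesis
      unfolding F_def by (intro summable_sums powser_inside[OF _ K(2)])
  qed
  then have "F holomorphic_on ball (complex_of_real x0) r"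
    by (rule power_series_holomorphic)
  moreover have "F (complex_of_real x) = complex_of_real (f x)" if "\<bar>x - x0\<bar> < r" for x
  proof -
    have "(\<lambda>n. c n * (x - x0) ^ n) sums f x"
      using series that by blast
    then have "(\<lambda>n. complex_of_real (c n * (x - x0) ^ n)) sums complex_of_real (f x)"
      by (simp only: sums_of_real_iff)
    then have "(\<lambda>n. complex_of_real (c n) * (complex_of_real x - complex_of_real x0) ^ n)
        sums complex_of_real (f x)"
      by simp
    then show ?thesis
      unfolding F_def by (rule sums_unique[symmetric])
  qed
  ultimately show "\<exists>r>0. \<exists>F. F holomorphic_on ball (complex_of_real x0) r \<and>
      (\<forall>x. \<bar>x - x0\<bar> < r \<longrightarrow> F (complex_of_real x) = complex_of_real (f x))"
    using \<open>r > 0\<close> by blast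
qed

lemma real_holomorphic_differentiable:
  assumes "real_holomorphic f"
  shows "f differentiable (at x)"
proof -
  obtain r F where r: "r > 0" "F holomorphic_on ball (complex_of_real x) r"
      "\<forall>y. \<bar>y - x\<bar> < r \<longrightarrow> F (complex_of_real y) = complex_of_real (f y)"
    using assms unfolding real_holomorphic_def by blast
  have "(F has_field_derivative deriv F (complex_of_real x)) (at (complex_of_real x))"
    using r by (intro holomorphic_derivI[OF r(2) open_ball]) simp
  then have "((\<lambda>t. Re (F (complex_of_real t))) has_real_derivative Re (deriv F (complex_of_real x))) (at x)"
    by (intro has_field_derivative_Re has_vector_derivative_real_field)
  then have "(f has_real_derivative Re (deriv F (complex_of_real x))) (at x)"
    by (rule has_field_derivative_transform_within_open[where S="ball x r"])
       (use r in \<open>auto simp: dist_real_def abs_minus_commute\<close>)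
  then show ?thesis
    using real_differentiable_def by blast
qed

lemma of_real_islimpt_interval:
  assumes "e > 0"
  shows "complex_of_real s islimpt complex_of_real ` {y. \<bar>y - s\<bar> < e}"
  unfolding islimpt_approachable
proof (intro allI impI)
  fix \<epsilon> :: real
  assume "\<epsilon> > 0"
  define w where "w = s + min \<epsilon> e / 2"
  have "\<bar>w - s\<bar> < e" "w \<noteq> s" "dist w s < \<epsilon>"
    using \<open>e > 0\<close> \<open>\<epsilon> > 0\<close> unfolding w_def by (auto simp: dist_real_def)
  then show "\<exists>x'\<in>complex_of_real ` {y. \<bar>y - s\<bar> < e}.
      x' \<noteq> complex_of_real s \<and> dist x' (complex_of_real s) < \<epsilon>"
    by (intro bexI[of _ "complex_of_real w"]) (simp_all only: dist_of_real, auto)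
qed

lemma holomorphic_extension_vanishes:
  fixes f :: "real \<Rightarrow> real"
  assumes F: "F holomorphic_on ball (complex_of_real t) r"
      "\<forall>x. \<bar>x - t\<bar> < r \<longrightarrow> F (complex_of_real x) = complex_of_real (f x)"
    and s: "\<bar>s - t\<bar> < r" "eventually (\<lambda>x. f x = 0) (nhds s)"
    and x: "\<bar>x - t\<bar> < r"
  shows "f x = 0"
proof -
  obtain e where e: "e > 0" "\<forall>y. \<bar>y - s\<bar> < e \<longrightarrow> f y = 0"
    using s(2) unfolding eventually_nhds_metric dist_real_def by blast
  define e' where "e' = min e (r - \<bar>s - t\<bar>)"
  have "e' > 0"
    using e s unfolding e'_def by simp
  define U where "U = complex_of_real ` {y. \<bar>y - s\<bar> < e'}"
  have U_ball: "U \<subseteq> ball (complex_of_real t) r"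
    unfolding U_def e'_def by (auto simp: dist_norm norm_minus_commute simp flip: of_real_diff)
  have F_U: "F z = 0" if "z \<in> U" for z
    using that U_ball F(2) e(2) unfolding U_def e'_def
    by (auto simp: dist_norm norm_minus_commute simp flip: of_real_diff)
  have "F (complex_of_real x) = 0"
    using x s(1) of_real_islimpt_interval[OF \<open>e' > 0\<close>, of s]
    by (intro analytic_continuation[OF F(1) open_ball connected_ball U_ball _ _ F_U])
       (auto simp: U_def dist_norm norm_minus_commute simp flip: of_real_diff)
  then show ?thesis
    using F(2) x by simp
qed

lemma open_Collect_eventually_nhds: "open {x. eventually P (nhds x)}"
  unfolding open_subopen[of "{x. eventually P (nhds x)}"]
proof
  fix t
  assume "t \<in> {x. eventually P (nhds x)}"
  then have "eventually (\<lambda>y. eventually P (nhds y)) (nhds t)"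
    by (simp add: eventually_eventually)
  then show "\<exists>T. open T \<and> t \<in> T \<and> T \<subseteq> {x. eventually P (nhds x)}"
    unfolding eventually_nhds by blast
qed

text \<open>The identity theorem: the set of points near which $f$ vanishes is open, and closed by
  analytic continuation of the local holomorphic extensions.\<close>

lemma real_holomorphic_vanishing_on_interval:
  assumes "real_holomorphic f" "a < b" "\<forall>t. a < t \<and> t < b \<longrightarrow> f t = 0"
  shows "f t = 0"
proof -
  define Z where "Z = {t. eventually (\<lambda>x. f x = 0) (nhds t)}"
  have "open Z"
    unfolding Z_def by (rule open_Collect_eventually_nhds)
  moreover have "open (- Z)"
    unfolding open_subopen[of "- Z"]
  proof
    fix t assume "t \<in> - Z"
    obtain r F where r: "r > 0" "F holomorphic_on ball (complex_of_real t) r"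
        "\<forall>x. \<bar>x - t\<bar> < r \<longrightarrow> F (complex_of_real x) = complex_of_real (f x)"
      using assms(1) unfolding real_holomorphic_def by blast
    have "s \<notin> Z" if "s \<in> ball t r" for s
    proof
      assume "s \<in> Z"
      have "f x = 0" if "x \<in> ball t r" for x
        using holomorphic_extension_vanishes[OF r(2,3), of s x] \<open>s \<in> Z\<close> \<open>s \<in> ball t r\<close> that
        unfolding Z_def by (simp add: dist_real_def abs_minus_commute)
      then have "t \<in> Z"
        unfolding Z_def eventually_nhds using r(1) by (intro CollectI exI[of _ "ball t r"]) auto
      then show False
        using \<open>t \<in> - Z\<close> by blast
    qed
    then show "\<exists>T. open T \<and> t \<in> T \<and> T \<subseteq> - Z"
      using r(1) by (intro exI[of _ "ball t r"]) auto
  qed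
  moreover have "(a + b) / 2 \<in> Z"
  proof -
    have "\<forall>x\<in>{a<..<b}. f x = 0"
      using assms(3) by simp
    then show ?thesis
      unfolding Z_def eventually_nhds using assms(2) by (intro CollectI exI[of _ "{a<..<b}"]) auto
  qed
  ultimately have "Z = UNIV"
    using connectedD[OF connected_UNIV, of Z "- Z"] by blast
  then show ?thesis
    unfolding Z_def using eventually_nhds_x_imp_x by blast
qed

section \<open>Realizations of networks\<close>

lemma realize_Cons:
  "ns \<noteq> [] \<Longrightarrow> realize \<rho> (n # m # ns) ((A, b) # \<Phi>) x =
     realize \<rho> (m # ns) \<Phi> (\<lambda>i. \<rho> ((\<Sum>j<n. A i j * x j) + b i))"
  by (simp add: realize_def)

lemma realize_one_hidden:
  "realize \<rho> [n, h, 1] [(A, b), (C, c)] x = (\<Sum>j<h. C 0 j * \<rho> ((\<Sum>i<n. A j i * x i) + b j)) + c 0"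
  by (simp add: realize_def)

lemma nn_eval_in_function_class:
  assumes const: "\<And>c. P (\<lambda>t. c)"
    and add: "\<And>f g. P f \<Longrightarrow> P g \<Longrightarrow> P (\<lambda>t. f t + g t)"
    and cmult: "\<And>f c. P f \<Longrightarrow> P (\<lambda>t. c * f t)"
    and activation: "\<And>f. P f \<Longrightarrow> P (\<lambda>t. \<rho> (f t))"
  shows "(\<And>j. P (\<lambda>t. x t j)) \<Longrightarrow> P (\<lambda>t. nn_eval \<rho> S \<Phi> (x t) i)"
proof (induction \<Phi> arbitrary: S x i)
  case Nil
  have "nn_eval \<rho> S [] y = y" for y
    by (cases "(\<rho>, S, [] :: layer list, y)" rule: nn_eval.cases) auto
  then show ?case
    using Nil by simp
next
  case (Cons L \<Phi>)
  obtain A b where L: "L = (A, b)"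
    by fastforce
  have sum: "P (\<lambda>t. \<Sum>j<n. f j t)" if "\<And>j. P (f j)" for f and n :: nat
    using that by (induction n) (simp_all add: const add)
  have affine: "P (\<lambda>t. (\<Sum>j<n. A i j * x t j) + b i)" for n i
    using Cons.prems by (intro add const sum cmult)
  show ?case
  proof (cases "\<exists>n m ns. S = n # m # ns")
    case True
    then obtain n m ns where S: "S = n # m # ns"
      by blast
    show ?thesis
    proof (cases "ns = []")
      case True
      then show ?thesis
        using affine unfolding S L by simp
    next
      case False
      have "P (\<lambda>t. nn_eval \<rho> (m # ns) \<Phi> (\<lambda>i. \<rho> ((\<Sum>j<n. A i j * x t j) + b i)) i)"
        by (intro Cons.IH activation affine)
      then show ?thesis
        using False unfolding S L by simp
    qed
  next
    case False
    then have "nn_eval \<rho> S (L # \<Phi>) y = y" for y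
      by (cases "(\<rho>, S, L # \<Phi>, y)" rule: nn_eval.cases) auto
    then show ?thesis
      using Cons.prems by simp
  qed
qed

lemma Ck_realize_axis:
  "Ck m \<rho> \<Longrightarrow> Ck m (\<lambda>t. realize \<rho> S \<Phi> (\<lambda>j. if j = 0 then t else 0))"
  unfolding realize_def
proof (rule nn_eval_in_function_class[where P = "Ck m"])
  show "Ck m (\<lambda>t. if j = 0 then t else 0)" for j
    by (cases "j = 0") (simp_all add: Ck_ident Ck_const)
qed (simp_all add: Ck_const Ck_add Ck_mult Ck_compose)

lemma real_holomorphic_realize_axis:
  "real_holomorphic \<rho> \<Longrightarrow> real_holomorphic (\<lambda>t. realize \<rho> S \<Phi> (\<lambda>j. if j = 0 then t else 0))"
  unfolding realize_def
proof (rule nn_eval_in_function_class[where P = real_holomorphic])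
  show "real_holomorphic (\<lambda>t. if j = 0 then t else 0)" for j
    by (cases "j = 0") (simp_all add: real_holomorphic_ident real_holomorphic_const)
qed (simp_all add: real_holomorphic_const real_holomorphic_add real_holomorphic_cmult
    real_holomorphic_compose)

lemma realize_bounded:
  assumes "\<forall>y. \<bar>\<rho> y\<bar> \<le> M"
  shows "\<Phi> \<in> NN (d # hs @ [h, 1]) \<Longrightarrow> \<exists>C. \<forall>x. \<bar>realize \<rho> (d # hs @ [h, 1]) \<Phi> x\<bar> \<le> C"
proof (induction hs arbitrary: d \<Phi>)
  case Nil
  then obtain A b C c where \<Phi>: "\<Phi> = [(A, b), (C, c)]"
    by (auto simp: NN_def numeral_2_eq_2 length_Suc_conv)
  have "\<bar>realize \<rho> [d, h, 1] \<Phi> x\<bar> \<le> (\<Sum>j<h. \<bar>C 0 j\<bar> * M) + \<bar>c 0\<bar>" for x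
  proof -
    have "\<bar>\<Sum>j<h. C 0 j * \<rho> ((\<Sum>i<d. A j i * x i) + b j)\<bar> \<le> (\<Sum>j<h. \<bar>C 0 j\<bar> * M)"
      using assms by (intro order_trans[OF sum_abs] sum_mono) (simp add: abs_mult mult_left_mono)
    then show ?thesis
      unfolding \<Phi> realize_one_hidden by linarith
  qed
  then show ?case
    by auto
next
  case (Cons n hs)
  then obtain A b \<Phi>' where \<Phi>: "\<Phi> = (A, b) # \<Phi>'" "\<Phi>' \<in> NN (n # hs @ [h, 1])"
    by (cases \<Phi>) (auto simp: NN_def)
  obtain C where "\<forall>y. \<bar>realize \<rho> (n # hs @ [h, 1]) \<Phi>' y\<bar> \<le> C"
    using Cons.IH[OF \<Phi>(2)] by blast
  then show ?case
    unfolding \<Phi> by (auto simp: realize_Cons)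
qed

section \<open>Approximation by shallow networks\<close>

definition shallow_approximable :: "(real \<Rightarrow> real) \<Rightarrow> nat \<Rightarrow> (real \<Rightarrow> real) \<Rightarrow> bool" where
  "shallow_approximable \<rho> h G \<longleftrightarrow> (\<forall>K>0. \<forall>e>0. \<exists>A b C c. \<forall>s. \<bar>s\<bar> \<le> K \<longrightarrow>
      \<bar>realize \<rho> [1, h, 1] [(A, b), (C, c)] (\<lambda>j. s) - G s\<bar> \<le> e)"

lemma realize_single_neuron:
  assumes "h \<ge> 1"
  shows "realize \<rho> [1, h, 1] [(\<lambda>j i. a, \<lambda>j. b), (\<lambda>i j. if j = 0 then c else 0, \<lambda>i. c')] (\<lambda>j. s)
    = c * \<rho> (a * s + b) + c'"
proof -
  have "(\<Sum>j<h. (if j = 0 then c else 0) * \<rho> (a * s + b)) = c * \<rho> (a * s + b)"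
    using assms by (simp add: if_distrib[of "\<lambda>x. x * _"] cong: if_cong)
  then show ?thesis
    unfolding realize_one_hidden by simp
qed

lemma shallow_approximable_affine:
  assumes "shallow_approximable \<rho> h G"
  shows "shallow_approximable \<rho> h (\<lambda>s. G (\<alpha> * s + \<beta>))"
  unfolding shallow_approximable_def
proof (intro allI impI)
  fix K e :: real
  assume "K > 0" "e > 0"
  have "0 \<le> \<bar>\<alpha>\<bar> * K"
    using \<open>K > 0\<close> by simp
  then have "\<bar>\<alpha>\<bar> * K + \<bar>\<beta>\<bar> + 1 > 0"
    using abs_ge_zero[of \<beta>] by linarith
  then obtain A b C c where approx: "\<forall>s. \<bar>s\<bar> \<le> \<bar>\<alpha>\<bar> * K + \<bar>\<beta>\<bar> + 1 \<longrightarrow>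
      \<bar>realize \<rho> [1, h, 1] [(A, b), (C, c)] (\<lambda>j. s) - G s\<bar> \<le> e"
    using assms \<open>e > 0\<close> unfolding shallow_approximable_def by blast
  have "\<bar>realize \<rho> [1, h, 1] [(\<lambda>j i. A j i * \<alpha>, \<lambda>j. A j 0 * \<beta> + b j), (C, c)] (\<lambda>j. s)
      - G (\<alpha> * s + \<beta>)\<bar> \<le> e" if "\<bar>s\<bar> \<le> K" for s
  proof -
    have "\<bar>\<alpha> * s + \<beta>\<bar> \<le> \<bar>\<alpha>\<bar> * K + \<bar>\<beta>\<bar> + 1"
      using that abs_triangle_ineq[of "\<alpha> * s" \<beta>] mult_left_mono[OF that, of "\<bar>\<alpha>\<bar>"]
      by (simp add: abs_mult)
    moreover have "realize \<rho> [1, h, 1] [(\<lambda>j i. A j i * \<alpha>, \<lambda>j. A j 0 * \<beta> + b j), (C, c)] (\<lambda>j. s)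
        = realize \<rho> [1, h, 1] [(A, b), (C, c)] (\<lambda>j. \<alpha> * s + \<beta>)"
      unfolding realize_one_hidden by (simp add: algebra_simps)
    ultimately show ?thesis
      using approx by simp
  qed
  then show "\<exists>A b C c. \<forall>s. \<bar>s\<bar> \<le> K \<longrightarrow>
      \<bar>realize \<rho> [1, h, 1] [(A, b), (C, c)] (\<lambda>j. s) - G (\<alpha> * s + \<beta>)\<bar> \<le> e"
    by blast
qed

text \<open>This is what lets a single neuron transmit its input approximately.\<close>

lemma rescaled_increment_approx_ident:
  assumes D: "(\<rho> has_real_derivative D) (at p)" "D \<noteq> 0" and "B > 0" "\<delta> > 0"
  shows "\<exists>\<epsilon>>0. \<forall>t. \<bar>t\<bar> \<le> B \<longrightarrow> \<bar>(\<rho> (p + \<epsilon> * t) - \<rho> p) / (\<epsilon> * D) - t\<bar> \<le> \<delta>"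
proof -
  define \<eta> where "\<eta> = \<delta> * \<bar>D\<bar> / B"
  have "\<eta> > 0"
    unfolding \<eta>_def using assms by simp
  from D(1) have "(\<lambda>h. (\<rho> (p + h) - \<rho> p) / h) \<midarrow>0\<rightarrow> D"
    by (simp add: DERIV_def)
  then obtain \<gamma> where \<gamma>: "\<gamma> > 0"
      "\<forall>h. h \<noteq> 0 \<and> \<bar>h\<bar> < \<gamma> \<longrightarrow> \<bar>(\<rho> (p + h) - \<rho> p) / h - D\<bar> < \<eta>"
    unfolding LIM_eq using \<open>\<eta> > 0\<close> by auto
  define \<epsilon> where "\<epsilon> = \<gamma> / (2 * B)"
  have "\<epsilon> > 0"
    unfolding \<epsilon>_def using \<gamma> \<open>B > 0\<close> by simp
  have "\<bar>(\<rho> (p + \<epsilon> * t) - \<rho> p) / (\<epsilon> * D) - t\<bar> \<le> \<delta>" if t: "\<bar>t\<bar> \<le> B" for t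
  proof (cases "t = 0")
    case True
    then show ?thesis
      using \<open>\<delta> > 0\<close> by simp
  next
    case False
    define h where "h = \<epsilon> * t"
    have "\<bar>h\<bar> \<le> \<gamma> / 2"
      unfolding h_def \<epsilon>_def using t \<open>B > 0\<close> \<gamma>(1)
      by (simp add: abs_mult field_simps mult_left_mono)
    then have q: "\<bar>(\<rho> (p + h) - \<rho> p) / h - D\<bar> < \<eta>" "h \<noteq> 0"
      using \<gamma> False \<open>\<epsilon> > 0\<close> unfolding h_def by auto
    have "(\<rho> (p + \<epsilon> * t) - \<rho> p) / (\<epsilon> * D) - t = ((\<rho> (p + h) - \<rho> p) / h - D) * (t / D)"
      unfolding h_def using \<open>\<epsilon> > 0\<close> False D(2) by (simp add: field_simps)
    also have "\<bar>\<dots>\<bar> \<le> \<eta> * (B / \<bar>D\<bar>)"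
      unfolding abs_mult using q divide_right_mono[OF t abs_ge_zero[of D]] by (intro mult_mono) auto
    also have "\<dots> = \<delta>"
      unfolding \<eta>_def using \<open>B > 0\<close> D(2) by simp
    finally show ?thesis .
  qed
  then show ?thesis
    using \<open>\<epsilon> > 0\<close> by blast
qed

lemma shallow_approximable_ident:
  assumes D: "(\<rho> has_real_derivative D) (at p)" "D \<noteq> 0" and "h \<ge> 1"
  shows "shallow_approximable \<rho> h (\<lambda>s. s)"
  unfolding shallow_approximable_def
proof (intro allI impI)
  fix K e :: real
  assume "K > 0" "e > 0"
  then obtain \<epsilon> where \<epsilon>: "\<epsilon> > 0" "\<forall>s. \<bar>s\<bar> \<le> K \<longrightarrow> \<bar>(\<rho> (p + \<epsilon> * s) - \<rho> p) / (\<epsilon> * D) - s\<bar> \<le> e"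
    using rescaled_increment_approx_ident[OF D] by blast
  have "realize \<rho> [1, h, 1] [(\<lambda>j i. \<epsilon>, \<lambda>j. p), (\<lambda>i j. if j = 0 then 1 / (\<epsilon> * D) else 0,
      \<lambda>i. - \<rho> p / (\<epsilon> * D))] (\<lambda>j. s) = (\<rho> (p + \<epsilon> * s) - \<rho> p) / (\<epsilon> * D)" for s
    unfolding realize_single_neuron[OF \<open>h \<ge> 1\<close>] by (simp add: add.commute diff_divide_distrib)
  then show "\<exists>A b C c. \<forall>s. \<bar>s\<bar> \<le> K \<longrightarrow> \<bar>realize \<rho> [1, h, 1] [(A, b), (C, c)] (\<lambda>j. s) - s\<bar> \<le> e"
    using \<epsilon>(2) by metis
qed

lemma realize_two_neurons:
  assumes "h \<ge> 2"
  shows "realize \<rho> [1, h, 1] [(\<lambda>j i. 1, \<lambda>j. if j = 0 then b0 else b1),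
      (\<lambda>i j. if j = 0 then c0 else if j = 1 then c1 else 0, \<lambda>i. 0)] (\<lambda>j. s)
    = c0 * \<rho> (s + b0) + c1 * \<rho> (s + b1)"
proof -
  obtain k where "h = Suc (Suc k)"
    using assms by (metis add_2_eq_Suc le_Suc_ex)
  then show ?thesis
    unfolding realize_one_hidden by (simp only: sum.lessThan_Suc_shift) simp
qed

text \<open>Two neurons realize the difference quotient $(\rho(s + z + \eta) - \rho(s + z)) / \eta$,
  which by the mean value theorem is uniformly close to $\rho'(s + z)$.\<close>

lemma shallow_approximable_deriv:
  assumes dif: "\<And>x. \<rho> differentiable (at x)" and cont: "continuous_on UNIV (deriv \<rho>)"
    and "h \<ge> 2"
  shows "shallow_approximable \<rho> h (\<lambda>s. deriv \<rho> (s + z))"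
  unfolding shallow_approximable_def
proof (intro allI impI)
  fix K e :: real
  assume "K > 0" "e > 0"
  let ?I = "cbox (z - K - 1) (z + K + 1)"
  have "uniformly_continuous_on ?I (deriv \<rho>)"
    by (rule compact_uniformly_continuous[OF continuous_on_subset[OF cont]]) auto
  then obtain \<delta> where \<delta>: "\<delta> > 0"
      "\<forall>s\<in>?I. \<forall>s'\<in>?I. dist s' s < \<delta> \<longrightarrow> dist (deriv \<rho> s') (deriv \<rho> s) < e"
    unfolding uniformly_continuous_on_def using \<open>e > 0\<close> by blast
  define \<eta> where "\<eta> = min (\<delta> / 2) (1 / 2)"
  have \<eta>: "\<eta> > 0" "\<eta> < \<delta>" "\<eta> < 1"
    unfolding \<eta>_def using \<delta> by auto
  let ?\<Phi> = "[(\<lambda>j i. 1, \<lambda>j. if j = 0 then z + \<eta> else z),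
      (\<lambda>i j. if j = 0 then 1 / \<eta> else if j = 1 then - 1 / \<eta> else 0, \<lambda>i. 0)]"
  have "\<bar>realize \<rho> [1, h, 1] ?\<Phi> (\<lambda>j. s) - deriv \<rho> (s + z)\<bar> \<le> e" if "\<bar>s\<bar> \<le> K" for s
  proof -
    obtain \<xi> where \<xi>: "s + z < \<xi>" "\<xi> < s + z + \<eta>"
        "\<rho> (s + z + \<eta>) - \<rho> (s + z) = (s + z + \<eta> - (s + z)) * deriv \<rho> \<xi>"
      using MVT2[of "s + z" "s + z + \<eta>" \<rho> "deriv \<rho>"] \<eta>(1) dif
      by (auto simp: DERIV_deriv_iff_real_differentiable)
    have "realize \<rho> [1, h, 1] ?\<Phi> (\<lambda>j. s) = (\<rho> (s + z + \<eta>) - \<rho> (s + z)) / \<eta>"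
      unfolding realize_two_neurons[OF \<open>h \<ge> 2\<close>] by (simp add: add.assoc diff_divide_distrib)
    also have "\<dots> = deriv \<rho> \<xi>"
      using \<xi>(3) \<eta>(1) by simp
    moreover have "\<xi> \<in> ?I" "s + z \<in> ?I" "dist \<xi> (s + z) < \<delta>"
      using \<xi> \<eta> that by (auto simp: dist_real_def)
    ultimately show ?thesis
      using \<delta>(2) by (fastforce simp: dist_real_def)
  qed
  then show "\<exists>A b C c. \<forall>s. \<bar>s\<bar> \<le> K \<longrightarrow>
      \<bar>realize \<rho> [1, h, 1] [(A, b), (C, c)] (\<lambda>j. s) - deriv \<rho> (s + z)\<bar> \<le> e"
    by blast
qed

lemma rescaled_one_sided_power_error:
  fixes N :: real
  assumes "k < m" and near_m: "\<forall>x. P x \<longrightarrow> \<bar>\<rho> x - x ^ m\<bar> \<le> s0"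
    and near_k: "\<forall>x. \<not> P x \<longrightarrow> \<bar>\<rho> x - x ^ k\<bar> \<le> s0"
    and scaling: "\<forall>x c. c > 0 \<longrightarrow> (P (c * x) \<longleftrightarrow> P x)"
    and "N \<ge> 1" "\<bar>s\<bar> \<le> K"
  shows "\<bar>\<rho> (N * s) / N ^ m - (if P s then s ^ m else 0)\<bar> \<le> (K ^ k + s0) / N"
proof -
  have "\<bar>\<rho> 0 - 0 ^ m\<bar> \<le> s0 \<or> \<bar>\<rho> 0 - 0 ^ k\<bar> \<le> s0"
    using near_m near_k by blast
  then have "s0 \<ge> 0"
    by (meson abs_ge_zero order_trans)
  have N_pow: "N ^ m = N ^ (m - 1) * N" "1 \<le> N ^ (m - 1)" "N ^ k \<le> N ^ (m - 1)"
    using \<open>k < m\<close> \<open>N \<ge> 1\<close> by (simp_all add: power_increasing flip: power_Suc2)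
  have "0 \<le> K ^ k"
    using \<open>\<bar>s\<bar> \<le> K\<close> by simp
  have "\<bar>\<rho> (N * s) - N ^ m * (if P s then s ^ m else 0)\<bar> \<le> N ^ (m - 1) * (K ^ k + s0)"
  proof (cases "P s")
    case True
    then have "\<bar>\<rho> (N * s) - (N * s) ^ m\<bar> \<le> s0"
      using near_m scaling \<open>N \<ge> 1\<close> by simp
    moreover have "K ^ k + s0 \<le> N ^ (m - 1) * (K ^ k + s0)"
      using N_pow(2) \<open>0 \<le> K ^ k\<close> \<open>s0 \<ge> 0\<close> by (simp add: mult_le_cancel_right1)
    ultimately show ?thesis
      using True \<open>0 \<le> K ^ k\<close> by (simp add: power_mult_distrib)
  next
    case False
    then have "\<bar>\<rho> (N * s) - (N * s) ^ k\<bar> \<le> s0"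
      using near_k scaling \<open>N \<ge> 1\<close> by simp
    moreover have "\<bar>(N * s) ^ k\<bar> \<le> N ^ (m - 1) * K ^ k"
      unfolding power_mult_distrib abs_mult power_abs
      using \<open>N \<ge> 1\<close> \<open>\<bar>s\<bar> \<le> K\<close> N_pow(3) by (intro mult_mono power_mono) auto
    moreover have "s0 \<le> N ^ (m - 1) * s0"
      using N_pow(2) \<open>s0 \<ge> 0\<close> by (simp add: mult_le_cancel_right1)
    ultimately show ?thesis
      using False by (simp add: distrib_left)
  qed
  then have "\<bar>\<rho> (N * s) - N ^ m * (if P s then s ^ m else 0)\<bar> / N ^ m \<le> (K ^ k + s0) / N"
    using \<open>N \<ge> 1\<close> unfolding N_pow(1) by (simp add: field_simps)
  moreover have "\<rho> (N * s) / N ^ m - (if P s then s ^ m else 0)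
      = (\<rho> (N * s) - N ^ m * (if P s then s ^ m else 0)) / N ^ m"
    using \<open>N \<ge> 1\<close> by (simp add: field_simps)
  ultimately show ?thesis
    using \<open>N \<ge> 1\<close> by simp
qed

lemma shallow_approximable_one_sided_power:
  assumes "k < m" "\<forall>x. P x \<longrightarrow> \<bar>\<rho> x - x ^ m\<bar> \<le> s0" "\<forall>x. \<not> P x \<longrightarrow> \<bar>\<rho> x - x ^ k\<bar> \<le> s0"
    and "\<forall>x c. c > 0 \<longrightarrow> (P (c * x) \<longleftrightarrow> P x)" and "h \<ge> 1"
  shows "shallow_approximable \<rho> h (\<lambda>s. if P s then s ^ m else 0)"
  unfolding shallow_approximable_def
proof (intro allI impI)
  fix K e :: real
  assume "K > 0" "e > 0"
  obtain n :: nat where "(K ^ k + s0) / e < real n"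
    using reals_Archimedean2 by blast
  define N where "N = real n + 1"
  then have "N \<ge> 1" "(K ^ k + s0) / N \<le> e"
    using \<open>(K ^ k + s0) / e < real n\<close> \<open>e > 0\<close> by (simp_all add: field_simps)
  have "\<bar>realize \<rho> [1, h, 1] [(\<lambda>j i. N, \<lambda>j. 0), (\<lambda>i j. if j = 0 then 1 / N ^ m else 0, \<lambda>i. 0)]
      (\<lambda>j. s) - (if P s then s ^ m else 0)\<bar> \<le> e" if "\<bar>s\<bar> \<le> K" for s
    using rescaled_one_sided_power_error[OF assms(1-4) \<open>N \<ge> 1\<close> that] \<open>(K ^ k + s0) / N \<le> e\<close>
    unfolding realize_single_neuron[OF \<open>h \<ge> 1\<close>] by simp
  then show "\<exists>A b C c. \<forall>s. \<bar>s\<bar> \<le> K \<longrightarrow>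
      \<bar>realize \<rho> [1, h, 1] [(A, b), (C, c)] (\<lambda>j. s) - (if P s then s ^ m else 0)\<bar> \<le> e"
    by blast
qed

section \<open>Approximation by deep networks\<close>

definition deep_approximable :: "(real \<Rightarrow> real) \<Rightarrow> nat list \<Rightarrow> (real \<Rightarrow> real) \<Rightarrow> bool" where
  "deep_approximable \<rho> S G \<longleftrightarrow> (\<forall>B>0. \<forall>e>0. \<exists>\<Phi>\<in>NN S. \<forall>x. \<bar>x 0\<bar> \<le> B \<longrightarrow>
      \<bar>realize \<rho> S \<Phi> x - G (x 0)\<bar> \<le> e)"

lemma realize_first_coordinate:
  assumes "d \<ge> 1" "S \<noteq> []"
  shows "realize \<rho> (d # S) ((\<lambda>j i. if i = 0 then A j 0 else 0, b) # \<Phi>) x =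
    realize \<rho> (1 # S) ((A, b) # \<Phi>) (\<lambda>j. x 0)"
proof -
  have "(\<Sum>i<d. (if i = 0 then A j 0 else 0) * x i) = A j 0 * x 0" for j
    using assms(1) by (simp add: if_distrib[of "\<lambda>y. y * _"] cong: if_cong)
  with assms(2) show ?thesis
    by (cases S) (simp_all add: realize_def)
qed

lemma deep_approximable_one_hidden:
  assumes "d \<ge> 1" "shallow_approximable \<rho> h G"
  shows "deep_approximable \<rho> [d, h, 1] G"
  unfolding deep_approximable_def
proof (intro allI impI)
  fix B e :: real
  assume "B > 0" "e > 0"
  then obtain A b C c where approx: "\<forall>s. \<bar>s\<bar> \<le> B \<longrightarrow>
      \<bar>realize \<rho> [1, h, 1] [(A, b), (C, c)] (\<lambda>j. s) - G s\<bar> \<le> e"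
    using assms(2) unfolding shallow_approximable_def by blast
  have "[(\<lambda>j i. if i = 0 then A j 0 else 0, b), (C, c)] \<in> NN [d, h, 1]"
    by (simp add: NN_def)
  moreover have "\<bar>realize \<rho> [d, h, 1] [(\<lambda>j i. if i = 0 then A j 0 else 0, b), (C, c)] x - G (x 0)\<bar> \<le> e"
    if "\<bar>x 0\<bar> \<le> B" for x
    using approx that realize_first_coordinate[OF assms(1), of "[h, 1]" \<rho> A b "[(C, c)]" x] by simp
  ultimately show "\<exists>\<Phi>\<in>NN [d, h, 1]. \<forall>x. \<bar>x 0\<bar> \<le> B \<longrightarrow> \<bar>realize \<rho> [d, h, 1] \<Phi> x - G (x 0)\<bar> \<le> e"
    by blast
qed

lemma rescaled_increment_approx_continuous:
  fixes G :: "real \<Rightarrow> real"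
  assumes D: "(\<rho> has_real_derivative D) (at p)" "D \<noteq> 0" and G: "continuous_on UNIV G"
    and "B > 0" "e > 0"
  obtains \<epsilon> where "\<epsilon> > 0"
    "\<And>t. \<bar>t\<bar> \<le> B \<Longrightarrow> \<bar>(\<rho> (p + \<epsilon> * t) - \<rho> p) / (\<epsilon> * D)\<bar> \<le> B + 1"
    "\<And>t. \<bar>t\<bar> \<le> B \<Longrightarrow> \<bar>G ((\<rho> (p + \<epsilon> * t) - \<rho> p) / (\<epsilon> * D)) - G t\<bar> < e"
proof -
  let ?I = "cbox (- (B + 1)) (B + 1)"
  have "uniformly_continuous_on ?I G"
    by (rule compact_uniformly_continuous[OF continuous_on_subset[OF G]]) auto
  then obtain \<delta> where \<delta>: "\<delta> > 0" "\<forall>s\<in>?I. \<forall>s'\<in>?I. dist s' s < \<delta> \<longrightarrow> dist (G s') (G s) < e"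
    unfolding uniformly_continuous_on_def using \<open>e > 0\<close> by blast
  obtain \<epsilon> where \<epsilon>: "\<epsilon> > 0"
      "\<forall>t. \<bar>t\<bar> \<le> B \<longrightarrow> \<bar>(\<rho> (p + \<epsilon> * t) - \<rho> p) / (\<epsilon> * D) - t\<bar> \<le> min (\<delta> / 2) 1"
    using rescaled_increment_approx_ident[OF D \<open>B > 0\<close>, of "min (\<delta> / 2) 1"] \<delta>(1) by auto
  show thesis
  proof (rule that[OF \<open>\<epsilon> > 0\<close>])
    fix t :: real
    assume t: "\<bar>t\<bar> \<le> B"
    define \<psi> where "\<psi> = (\<rho> (p + \<epsilon> * t) - \<rho> p) / (\<epsilon> * D)"
    have "\<bar>\<psi> - t\<bar> \<le> min (\<delta> / 2) 1"
      unfolding \<psi>_def using \<epsilon>(2) t by blast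
    then show "\<bar>\<psi>\<bar> \<le> B + 1"
      using t by linarith
    then have "\<psi> \<in> ?I" "t \<in> ?I" "dist \<psi> t < \<delta>"
      using t \<delta>(1) \<open>\<bar>\<psi> - t\<bar> \<le> min (\<delta> / 2) 1\<close> by (auto simp: dist_real_def)
    then show "\<bar>G \<psi> - G t\<bar> < e"
      using \<delta>(2) by (simp add: dist_real_def)
  qed
qed

text \<open>The prepended layer passes on $\rho(p + \varepsilon x_0)$, which up to a small error is an
  affine image of $x_0$; the affine map is undone by reparametrizing $G$.\<close>

lemma deep_approximable_Cons:
  assumes D: "(\<rho> has_real_derivative D) (at p)" "D \<noteq> 0" and "d \<ge> 1" "ns \<noteq> []"
    and G: "continuous_on UNIV G"
    and approx: "\<And>\<alpha> \<beta>. deep_approximable \<rho> (m # ns) (\<lambda>s. G (\<alpha> * s + \<beta>))"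
  shows "deep_approximable \<rho> (d # m # ns) G"
  unfolding deep_approximable_def
proof (intro allI impI)
  fix B e :: real
  assume "B > 0" "e > 0"
  then obtain \<epsilon> where \<epsilon>: "\<epsilon> > 0"
      "\<And>t. \<bar>t\<bar> \<le> B \<Longrightarrow> \<bar>(\<rho> (p + \<epsilon> * t) - \<rho> p) / (\<epsilon> * D)\<bar> \<le> B + 1"
      "\<And>t. \<bar>t\<bar> \<le> B \<Longrightarrow> \<bar>G ((\<rho> (p + \<epsilon> * t) - \<rho> p) / (\<epsilon> * D)) - G t\<bar> < e / 2"
    using rescaled_increment_approx_continuous[OF D G, of B "e / 2"] by auto
  define B' where "B' = \<bar>\<rho> p\<bar> + \<bar>\<epsilon> * D\<bar> * (B + 1) + 1"
  have "0 \<le> \<bar>\<epsilon> * D\<bar> * (B + 1)"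
    using \<open>B > 0\<close> by simp
  then have "B' > 0"
    unfolding B'_def using abs_ge_zero[of "\<rho> p"] by linarith
  then obtain \<Phi> where \<Phi>: "\<Phi> \<in> NN (m # ns)" "\<forall>y. \<bar>y 0\<bar> \<le> B' \<longrightarrow>
      \<bar>realize \<rho> (m # ns) \<Phi> y - G (1 / (\<epsilon> * D) * y 0 + - \<rho> p / (\<epsilon> * D))\<bar> \<le> e / 2"
    using approx \<open>e > 0\<close> unfolding deep_approximable_def by (meson half_gt_zero)
  let ?\<Phi> = "(\<lambda>j i. if i = 0 then \<epsilon> else 0, \<lambda>j. p) # \<Phi>"
  have "\<bar>realize \<rho> (d # m # ns) ?\<Phi> x - G (x 0)\<bar> \<le> e" if x: "\<bar>x 0\<bar> \<le> B" for x
  proof -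
    define \<psi> where "\<psi> = (\<rho> (p + \<epsilon> * x 0) - \<rho> p) / (\<epsilon> * D)"
    have y0: "\<rho> (\<epsilon> * x 0 + p) = \<rho> p + (\<epsilon> * D) * \<psi>"
      unfolding \<psi>_def using \<epsilon>(1) D(2) by (simp add: add.commute)
    have "realize \<rho> (d # m # ns) ?\<Phi> x = realize \<rho> (m # ns) \<Phi> (\<lambda>j. \<rho> (\<epsilon> * x 0 + p))"
      using realize_first_coordinate[OF \<open>d \<ge> 1\<close>, of "m # ns" \<rho> "\<lambda>j i. \<epsilon>" "\<lambda>j. p" \<Phi> x] \<open>ns \<noteq> []\<close>
      by (simp add: realize_Cons)
    moreover have "\<bar>\<rho> (\<epsilon> * x 0 + p)\<bar> \<le> B'"
      using mult_left_mono[OF \<epsilon>(2)[OF x] abs_ge_zero[of "\<epsilon> * D"]]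
        abs_triangle_ineq[of "\<rho> p" "\<epsilon> * D * \<psi>"]
      unfolding y0 B'_def abs_mult \<psi>_def by linarith
    moreover have "G (1 / (\<epsilon> * D) * \<rho> (\<epsilon> * x 0 + p) + - \<rho> p / (\<epsilon> * D)) = G \<psi>"
      unfolding y0 using \<epsilon>(1) D(2) by (simp add: field_simps)
    ultimately have "\<bar>realize \<rho> (d # m # ns) ?\<Phi> x - G \<psi>\<bar> \<le> e / 2"
      using \<Phi>(2)[rule_format, of "\<lambda>j. \<rho> (\<epsilon> * x 0 + p)"] by simp
    moreover have "\<bar>G \<psi> - G (x 0)\<bar> < e / 2"
      unfolding \<psi>_def by (rule \<epsilon>(3)[OF x])
    ultimately show ?thesis
      by arith
  qed
  moreover have "?\<Phi> \<in> NN (d # m # ns)"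
    using \<Phi>(1) by (simp add: NN_def)
  ultimately show "\<exists>\<Phi>\<in>NN (d # m # ns). \<forall>x. \<bar>x 0\<bar> \<le> B \<longrightarrow>
      \<bar>realize \<rho> (d # m # ns) \<Phi> x - G (x 0)\<bar> \<le> e"
    by blast
qed

lemma deep_approximable:
  assumes D: "(\<rho> has_real_derivative D) (at p)" "D \<noteq> 0"
  shows "d \<ge> 1 \<Longrightarrow> \<forall>N\<in>set hs. N \<ge> 1 \<Longrightarrow> shallow_approximable \<rho> h G \<Longrightarrow> continuous_on UNIV G \<Longrightarrow>
    deep_approximable \<rho> (d # hs @ [h, 1]) G"
proof (induction hs arbitrary: d G)
  case Nil
  then show ?case
    using deep_approximable_one_hidden[of d \<rho> h G] by simp
next
  case (Cons m hs)
  have "deep_approximable \<rho> (m # hs @ [h, 1]) (\<lambda>s. G (\<alpha> * s + \<beta>))" for \<alpha> \<beta>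
    using Cons.prems by (intro Cons.IH shallow_approximable_affine continuous_on_compose2[OF Cons.prems(4)]
        continuous_intros) auto
  then show ?case
    using deep_approximable_Cons[OF D] Cons.prems(1,4) by simp
qed

section \<open>Non-closedness of the set of realizations\<close>

definition RNN_not_closed :: "(real \<Rightarrow> real) \<Rightarrow> nat \<Rightarrow> real \<Rightarrow> nat list \<Rightarrow> bool" where
  "RNN_not_closed \<rho> d B S \<longleftrightarrow> (\<exists>(\<Phi>s :: nat \<Rightarrow> layer list) (g :: (nat \<Rightarrow> real) \<Rightarrow> real).
      (\<forall>n. \<Phi>s n \<in> NN S) \<and> continuous_on (cube d B) g
    \<and> uniform_limit (cube d B) (\<lambda>n. realize \<rho> S (\<Phi>s n)) g sequentially
    \<and> (\<forall>\<Phi>\<in>NN S. \<exists>x\<in>cube d B. realize \<rho> S \<Phi> x \<noteq> g x))"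

lemma uniform_limit_inverse_bound:
  fixes f :: "nat \<Rightarrow> 'a \<Rightarrow> real"
  assumes "\<And>n x. x \<in> X \<Longrightarrow> \<bar>f n x - g x\<bar> \<le> 1 / real (Suc n)"
  shows "uniform_limit X f g sequentially"
proof (rule uniform_limitI)
  fix e :: real
  assume "e > 0"
  then obtain N :: nat where "N > 0" "inverse (real N) < e"
    using ex_inverse_of_nat_less by blast
  have "\<forall>x\<in>X. dist (f n x) (g x) < e" if "N \<le> n" for n
  proof
    fix x assume "x \<in> X"
    have "1 / real (Suc n) \<le> inverse (real N)"
      using that \<open>N > 0\<close> by (simp add: field_simps)
    then show "dist (f n x) (g x) < e"
      using assms[OF \<open>x \<in> X\<close>, of n] \<open>inverse (real N) < e\<close> by (simp add: dist_real_def)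
  qed
  then show "\<forall>\<^sub>F n in sequentially. \<forall>x\<in>X. dist (f n x) (g x) < e"
    unfolding eventually_sequentially by blast
qed

lemma RNN_not_closed_if_approximable:
  assumes "d \<ge> 1" "B > 0" and approx: "deep_approximable \<rho> S G" and G: "continuous_on UNIV G"
    and not_realized: "\<And>\<Phi>. \<Phi> \<in> NN S \<Longrightarrow>
      \<forall>t\<in>{-B..B}. realize \<rho> S \<Phi> (\<lambda>j. if j = 0 then t else 0) = G t \<Longrightarrow> False"
  shows "RNN_not_closed \<rho> d B S"
proof -
  have "\<forall>n. \<exists>\<Phi>\<in>NN S. \<forall>x. \<bar>x 0\<bar> \<le> B \<longrightarrow> \<bar>realize \<rho> S \<Phi> x - G (x 0)\<bar> \<le> 1 / real (Suc n)"
    using approx \<open>B > 0\<close> unfolding deep_approximable_def by simp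
  then have "\<exists>\<Phi>s. \<forall>n. \<Phi>s n \<in> NN S \<and>
      (\<forall>x. \<bar>x 0\<bar> \<le> B \<longrightarrow> \<bar>realize \<rho> S (\<Phi>s n) x - G (x 0)\<bar> \<le> 1 / real (Suc n))"
    unfolding Bex_def by (rule choice)
  then obtain \<Phi>s where \<Phi>s: "\<And>n. \<Phi>s n \<in> NN S"
      "\<And>n x. \<bar>x 0\<bar> \<le> B \<Longrightarrow> \<bar>realize \<rho> S (\<Phi>s n) x - G (x 0)\<bar> \<le> 1 / real (Suc n)"
    by blast
  have cube_0: "\<bar>x 0\<bar> \<le> B" if "x \<in> cube d B" for x
    using that \<open>d \<ge> 1\<close> unfolding cube_def by (auto simp: abs_le_iff)
  have axis_cube: "(\<lambda>j. if j = 0 then t else 0) \<in> cube d B" if "t \<in> {-B..B}" for t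
    using that \<open>d \<ge> 1\<close> unfolding cube_def by auto
  have "continuous_on (cube d B) (\<lambda>x. G (x 0))"
    by (rule continuous_on_compose2[OF G continuous_on_subset[OF continuous_on_product_coordinates]]) auto
  moreover have "uniform_limit (cube d B) (\<lambda>n. realize \<rho> S (\<Phi>s n)) (\<lambda>x. G (x 0)) sequentially"
    by (rule uniform_limit_inverse_bound) (rule \<Phi>s(2)[OF cube_0])
  moreover have "\<exists>x\<in>cube d B. realize \<rho> S \<Phi> x \<noteq> G (x 0)" if "\<Phi> \<in> NN S" for \<Phi>
  proof (rule ccontr)
    assume "\<not> ?thesis"
    then have "\<forall>t\<in>{-B..B}. realize \<rho> S \<Phi> (\<lambda>j. if j = 0 then t else 0) = G t"
      using axis_cube by force
    then show False
      using not_realized[OF that] by blast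
  qed
  ultimately show ?thesis
    unfolding RNN_not_closed_def using \<Phi>s(1) by blast
qed

lemma exists_nonzero_derivative:
  assumes "\<And>x. \<rho> differentiable (at x)" "\<rho> x \<noteq> \<rho> y"
  obtains p D where "(\<rho> has_real_derivative D) (at p)" "D \<noteq> 0"
proof -
  have "\<exists>p. deriv \<rho> p \<noteq> 0"
  proof (rule ccontr)
    assume "\<nexists>p. deriv \<rho> p \<noteq> 0"
    then have "(\<rho> has_real_derivative 0) (at z)" for z
      using assms(1)[of z] by (simp add: DERIV_deriv_iff_real_differentiable[symmetric])
    then have "\<rho> x = \<rho> y"
      using DERIV_isconst_all by blast
    then show False
      using assms(2) by simp
  qed
  then show thesis
    using that assms(1) DERIV_deriv_iff_real_differentiable by blast
qed

lemma C1_not_Cinf_imp_not_Ck_at_deriv: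
  assumes C1: "Ck 1 \<rho>" and "\<not> Cinf \<rho>"
  obtains k z where "Ck (Suc k) \<rho>" "\<not> Ck_at (Suc k) (deriv \<rho>) z"
proof -
  have "\<exists>k. Ck (Suc k) \<rho> \<and> \<not> Ck (Suc (Suc k)) \<rho>"
  proof (rule ccontr)
    assume "\<not> ?thesis"
    then have "Ck (Suc k) \<rho>" for k
      using C1 by (induction k) auto
    then have "Cinf \<rho>"
      unfolding Cinf_def using Ck_Suc_imp_Ck by blast
    then show False
      using \<open>\<not> Cinf \<rho>\<close> by blast
  qed
  then obtain k where "Ck (Suc k) \<rho>" "\<not> Ck (Suc (Suc k)) \<rho>"
    by blast
  moreover have "\<And>x. \<rho> differentiable (at x)"
    using C1 by (simp add: Ck_Suc)
  ultimately have "\<not> Ck (Suc k) (deriv \<rho>)"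
    by (simp add: Ck_Suc)
  then show thesis
    using that \<open>Ck (Suc k) \<rho>\<close> unfolding Ck_iff_Ck_at by blast
qed

lemma RNN_not_closed_C1_not_Cinf:
  assumes "d \<ge> 1" "B > 0" "\<forall>N\<in>set hs. N \<ge> 1" "h \<ge> 2" and C1: "Ck 1 \<rho>" and "\<not> Cinf \<rho>"
  shows "RNN_not_closed \<rho> d B (d # hs @ [h, 1])"
proof -
  obtain k z where Ck: "Ck (Suc k) \<rho>" and z: "\<not> Ck_at (Suc k) (deriv \<rho>) z"
    using C1_not_Cinf_imp_not_Ck_at_deriv[OF C1 \<open>\<not> Cinf \<rho>\<close>] .
  have dif: "\<And>x. \<rho> differentiable (at x)" and cont: "continuous_on UNIV (deriv \<rho>)"
    using C1 by (simp_all add: Ck_Suc Ck_0)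
  have "\<exists>x y. \<rho> x \<noteq> \<rho> y"
  proof (rule ccontr)
    assume "\<not> ?thesis"
    then have "\<rho> = (\<lambda>x. \<rho> 0)"
      by auto
    then show False
      using \<open>\<not> Cinf \<rho>\<close> Ck_const unfolding Cinf_def by metis
  qed
  then obtain p D where D: "(\<rho> has_real_derivative D) (at p)" "D \<noteq> 0"
    using exists_nonzero_derivative[OF dif] by blast
  have G: "continuous_on UNIV (\<lambda>s. deriv \<rho> (s + z))"
    by (rule continuous_on_compose2[OF cont]) (auto intro!: continuous_intros)
  have "deep_approximable \<rho> (d # hs @ [h, 1]) (\<lambda>s. deriv \<rho> (s + z))"
    by (rule deep_approximable[OF D assms(1,3) shallow_approximable_deriv[OF dif cont \<open>h \<ge> 2\<close>] G])
  then show ?thesis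
  proof (rule RNN_not_closed_if_approximable[OF assms(1,2) _ G])
    fix \<Phi>
    assume eq: "\<forall>t\<in>{-B..B}.
      realize \<rho> (d # hs @ [h, 1]) \<Phi> (\<lambda>j. if j = 0 then t else 0) = deriv \<rho> (t + z)"
    have "deriv \<rho> s = realize \<rho> (d # hs @ [h, 1]) \<Phi> (\<lambda>j. if j = 0 then s + - z else 0)"
      if "dist s z < B" for s
    proof -
      have "s + - z \<in> {-B..B}"
        using that by (auto simp: dist_real_def)
      then show ?thesis
        using eq by simp
    qed
    then have "eventually (\<lambda>s. deriv \<rho> s = realize \<rho> (d # hs @ [h, 1]) \<Phi>
        (\<lambda>j. if j = 0 then s + - z else 0)) (nhds z)"
      using \<open>B > 0\<close> unfolding eventually_nhds_metric by blast
    moreover have "Ck (Suc k) (\<lambda>s. realize \<rho> (d # hs @ [h, 1]) \<Phi> (\<lambda>j. if j = 0 then s + - z else 0))"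
      by (rule Ck_compose[OF Ck_realize_axis[OF Ck] Ck_add[OF Ck_ident Ck_const]])
    ultimately have "Ck_at (Suc k) (deriv \<rho>) z"
      unfolding Ck_iff_Ck_at by (simp add: Ck_at_cong)
    then show False
      using z by blast
  qed
qed

lemma RNN_not_closed_bounded_analytic:
  assumes "d \<ge> 1" "B > 0" "\<forall>N\<in>set hs. N \<ge> 1" "h \<ge> 1"
    and "bounded (range \<rho>)" "real_analytic \<rho>" "\<rho> x \<noteq> \<rho> y"
  shows "RNN_not_closed \<rho> d B (d # hs @ [h, 1])"
proof -
  have hol: "real_holomorphic \<rho>"
    using \<open>real_analytic \<rho>\<close> by (rule real_analytic_imp_real_holomorphic)
  obtain p D where D: "(\<rho> has_real_derivative D) (at p)" "D \<noteq> 0"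
    using exists_nonzero_derivative[OF real_holomorphic_differentiable[OF hol] \<open>\<rho> x \<noteq> \<rho> y\<close>] .
  obtain M where M: "\<forall>y. \<bar>\<rho> y\<bar> \<le> M"
    using \<open>bounded (range \<rho>)\<close> unfolding bounded_pos by auto
  have "deep_approximable \<rho> (d # hs @ [h, 1]) (\<lambda>s. s)"
    by (rule deep_approximable[OF D assms(1,3) shallow_approximable_ident[OF D \<open>h \<ge> 1\<close>]
          continuous_on_id])
  then show ?thesis
  proof (rule RNN_not_closed_if_approximable[OF assms(1,2) _ continuous_on_id])
    fix \<Phi>
    assume \<Phi>: "\<Phi> \<in> NN (d # hs @ [h, 1])"
      and eq: "\<forall>t\<in>{-B..B}. realize \<rho> (d # hs @ [h, 1]) \<Phi> (\<lambda>j. if j = 0 then t else 0) = t"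
    define R where "R t = realize \<rho> (d # hs @ [h, 1]) \<Phi> (\<lambda>j. if j = 0 then t else 0)" for t
    have "real_holomorphic (\<lambda>t. R t + (- 1) * t)"
      unfolding R_def
      by (intro real_holomorphic_add real_holomorphic_cmult real_holomorphic_ident
          real_holomorphic_realize_axis hol)
    then have R_ident: "R t + (- 1) * t = 0" for t
      by (rule real_holomorphic_vanishing_on_interval[of _ "- B" B])
         (use \<open>B > 0\<close> eq in \<open>auto simp: R_def\<close>)
    obtain C where "\<forall>x. \<bar>realize \<rho> (d # hs @ [h, 1]) \<Phi> x\<bar> \<le> C"
      using realize_bounded[OF M \<Phi>] by blast
    then have "\<bar>R (\<bar>C\<bar> + 1)\<bar> \<le> C"
      unfolding R_def by blast
    then show False
      using R_ident[of "\<bar>C\<bar> + 1"] by simp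
  qed
qed

lemma RNN_not_closed_one_sided_power:
  assumes "d \<ge> 1" "B > 0" "\<forall>N\<in>set hs. N \<ge> 1" "(\<rho> has_real_derivative D) (at p)" "D \<noteq> 0"
    and "Ck m \<rho>" "shallow_approximable \<rho> h G" "continuous_on UNIV G"
    and "open U" "open V" "0 \<in> closure U" "0 \<in> closure V" "U \<subseteq> {-B..B}" "V \<subseteq> {-B..B}"
    and "\<forall>t\<in>U. G t = t ^ m" "\<forall>t\<in>V. G t = 0"
  shows "RNN_not_closed \<rho> d B (d # hs @ [h, 1])"
proof (rule RNN_not_closed_if_approximable[OF assms(1,2) deep_approximable[OF assms(4,5,1,3,7,8)] assms(8)])
  fix \<Phi>
  assume "\<forall>t\<in>{-B..B}. realize \<rho> (d # hs @ [h, 1]) \<Phi> (\<lambda>j. if j = 0 then t else 0) = G t"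
  then have "\<not> Ck m (\<lambda>t. realize \<rho> (d # hs @ [h, 1]) \<Phi> (\<lambda>j. if j = 0 then t else 0))"
    using assms(9-16) by (intro power_glued_to_zero_not_Ck[of U V]) auto
  then show False
    using Ck_realize_axis[OF \<open>Ck m \<rho>\<close>] by blast
qed

lemma approx_homogeneous_nonconstant:
  assumes "approx_homogeneous \<rho> r q" "r \<noteq> q"
  shows "\<exists>x y. \<rho> x \<noteq> \<rho> y"
proof (rule ccontr)
  assume "\<not> ?thesis"
  then have const: "\<rho> x = \<rho> 0" for x
    by blast
  obtain s where s: "\<forall>x\<ge>0. \<bar>\<rho> x - x ^ r\<bar> \<le> s" "\<forall>x\<le>0. \<bar>\<rho> x - x ^ q\<bar> \<le> s"
    using assms(1) unfolding approx_homogeneous_def by blast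
  define y where "y = \<bar>\<rho> 0\<bar> + \<bar>s\<bar> + 1"
  have "1 \<le> y"
    unfolding y_def by simp
  consider "r \<ge> 1" | "q \<ge> 1"
    using assms(2) by linarith
  then show False
  proof cases
    case 1
    then have "y \<le> \<bar>y ^ r\<bar>"
      using \<open>1 \<le> y\<close> by (simp add: self_le_power)
    moreover have "\<bar>\<rho> 0 - y ^ r\<bar> \<le> s"
      using s(1)[rule_format, of y] const[of y] \<open>1 \<le> y\<close> by simp
    ultimately show False
      unfolding y_def by linarith
  next
    case 2
    then have "y \<le> \<bar>(- y) ^ q\<bar>"
      using \<open>1 \<le> y\<close> by (simp add: power_abs self_le_power)
    moreover have "\<bar>\<rho> 0 - (- y) ^ q\<bar> \<le> s"
      using s(2)[rule_format, of "- y"] const[of "- y"] \<open>1 \<le> y\<close> by simp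
    ultimately show False
      unfolding y_def by linarith
  qed
qed

lemma RNN_not_closed_approx_homogeneous:
  assumes "d \<ge> 1" "B > 0" "\<forall>N\<in>set hs. N \<ge> 1" "h \<ge> 1"
    and "approx_homogeneous \<rho> r q" "r \<noteq> q" "Ck (max r q) \<rho>"
  shows "RNN_not_closed \<rho> d B (d # hs @ [h, 1])"
proof -
  obtain s0 where s0: "\<forall>x\<ge>0. \<bar>\<rho> x - x ^ r\<bar> \<le> s0" "\<forall>x\<le>0. \<bar>\<rho> x - x ^ q\<bar> \<le> s0"
    using assms(5) unfolding approx_homogeneous_def by blast
  have "Ck 1 \<rho>"
    using assms(6,7) by (intro Ck_mono[of 1 "max r q"]) auto
  then have "\<And>x. \<rho> differentiable (at x)"
    by (simp add: Ck_Suc)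
  then obtain p D where D: "(\<rho> has_real_derivative D) (at p)" "D \<noteq> 0"
    using exists_nonzero_derivative approx_homogeneous_nonconstant[OF assms(5,6)] by metis
  have closures: "0 \<in> closure {0<..<B}" "0 \<in> closure {-B<..<0}"
    using \<open>B > 0\<close> by (simp_all add: closure_greaterThanLessThan)
  show ?thesis
  proof (cases "q < r")
    case True
    have "shallow_approximable \<rho> h (\<lambda>s. if 0 \<le> s then s ^ r else 0)"
      using True s0 assms(4) by (intro shallow_approximable_one_sided_power) (auto simp: zero_le_mult_iff)
    moreover have "(\<lambda>s::real. if 0 \<le> s then s ^ r else 0) = (\<lambda>s. max s 0 ^ r)"
      using True by (intro ext) (auto simp: max_def power_0_left)
    moreover have "continuous_on UNIV (\<lambda>s::real. max s 0 ^ r)"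
      by (intro continuous_intros)
    ultimately show ?thesis
      using True assms(1-3,7) D closures
      by (intro RNN_not_closed_one_sided_power[of _ _ _ _ _ _ r _ _ "{0<..<B}" "{-B<..<0}"]) auto
  next
    case False
    then have "r < q"
      using assms(6) by simp
    have "shallow_approximable \<rho> h (\<lambda>s. if s \<le> 0 then s ^ q else 0)"
      using \<open>r < q\<close> s0 assms(4) by (intro shallow_approximable_one_sided_power) (auto simp: mult_le_0_iff)
    moreover have "(\<lambda>s::real. if s \<le> 0 then s ^ q else 0) = (\<lambda>s. min s 0 ^ q)"
      using \<open>r < q\<close> by (intro ext) (auto simp: min_def power_0_left)
    moreover have "continuous_on UNIV (\<lambda>s::real. min s 0 ^ q)"
      by (intro continuous_intros)
    ultimately show ?thesis
      using \<open>r < q\<close> assms(1-3,7) D closures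
      by (intro RNN_not_closed_one_sided_power[of _ _ _ _ _ _ q _ _ "{-B<..<0}" "{0<..<B}"]) auto
  qed
qed

theorem theorem3p3:
  fixes d :: nat and hidden :: "nat list" and B :: real and \<rho> :: "real \<Rightarrow> real"
  assumes "d \<ge> 1" and "hidden \<noteq> []" and "\<forall>N\<in>set hidden. N \<ge> 1"
    and "B > 0"
    and "(last hidden \<ge> 2 \<and> Ck 1 \<rho> \<and> \<not> Cinf \<rho>)
       \<or> (last hidden \<ge> 2 \<and> bounded (range \<rho>) \<and> real_analytic \<rho> \<and> (\<exists>x y. \<rho> x \<noteq> \<rho> y))
       \<or> (\<exists>r q. approx_homogeneous \<rho> r q \<and> r \<noteq> q \<and> Ck (max r q) \<rho>)"
  shows "\<exists>(\<Phi>s :: nat \<Rightarrow> layer list) (g :: (nat \<Rightarrow> real) \<Rightarrow> real).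
           (\<forall>n. \<Phi>s n \<in> NN (d # hidden @ [1]))
         \<and> continuous_on (cube d B) g
         \<and> uniform_limit (cube d B) (\<lambda>n. realize \<rho> (d # hidden @ [1]) (\<Phi>s n)) g sequentially
         \<and> (\<forall>\<Phi>\<in>NN (d # hidden @ [1]). \<exists>x\<in>cube d B. realize \<rho> (d # hidden @ [1]) \<Phi> x \<noteq> g x)"
proof -
  obtain hs h where hidden: "hidden = hs @ [h]"
    using \<open>hidden \<noteq> []\<close> by (metis append_butlast_last_id)
  have hs: "\<forall>N\<in>set hs. N \<ge> 1" and "h \<ge> 1" "last hidden = h"
    using assms(3) unfolding hidden by auto
  from assms(5) have "RNN_not_closed \<rho> d B (d # hs @ [h, 1])"
  proof (elim disjE conjE exE)
    assume "2 \<le> last hidden" "Ck 1 \<rho>" "\<not> Cinf \<rho>"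
    then show ?thesis
      using RNN_not_closed_C1_not_Cinf[OF assms(1,4) hs] \<open>last hidden = h\<close> by simp
  next
    fix x y
    assume "bounded (range \<rho>)" "real_analytic \<rho>" "\<rho> x \<noteq> \<rho> y"
    then show ?thesis
      by (rule RNN_not_closed_bounded_analytic[OF assms(1,4) hs \<open>h \<ge> 1\<close>])
  next
    fix r q
    assume "approx_homogeneous \<rho> r q" "r \<noteq> q" "Ck (max r q) \<rho>"
    then show ?thesis
      by (rule RNN_not_closed_approx_homogeneous[OF assms(1,4) hs \<open>h \<ge> 1\<close>])
  qed
  then show ?thesis
    unfolding RNN_not_closed_def hidden by simp
qed

end
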